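(* Let $t(\varphi)$ and $s(\varphi)$ be real trigonometric polynomials with $\deg s<\deg t$, such that all roots of $t$ in the cylinder $\mathbb{C}/2\pi\mathbb{Z}$ are real. Put $r=s/t$. Then for every natural number $n$ \[ (P)\int_0^{2\pi}r^n(\varphi)\,\mathrm{d}\varphi:=\frac12\int_0^{2\pi}(r(\varphi)+i0)^n\,\mathrm{d}\varphi+\frac12\int_0^{2\pi}(r(\varphi)-i0)^n\,\mathrm{d}\varphi=0 . \]
   Context: A real trigonometric polynomial of degree $k$ is $t(\varphi)=\sum_{j=0}^k(a_j\cos j\varphi+b_j\sin j\varphi)$ with real coefficients and $(a_k,b_k)\ne(0,0)$; it extends holomorphically to $\mathbb{C}/2\pi\mathbb{Z}$, where it has $2k$ zeros counted with multiplicity. $\int(r\pm i0)^n\,\mathrm{d}\varphi$ means $\lim_{\eta\searrow0}\int_0^{2\pi}(r(\varphi)\pm i\eta)^n\,\mathrm{d}\varphi$. *)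

theory Defs
  imports "HOL-Analysis.Analysis"
begin

text \<open>Holomorphic extension to the complex plane (equivalently the cylinder C/2piZ)
 of the real trigonometric polynomial with coefficients a j, b j, j = 0..k:
 t(z) = sum_{j=0}^k (a_j cos(j z) + b_j sin(j z)).\<close>
definition trig_poly :: "nat \<Rightarrow> (nat \<Rightarrow> real) \<Rightarrow> (nat \<Rightarrow> real) \<Rightarrow> complex \<Rightarrow> complex" where
  "trig_poly k a b z =
     (\<Sum>j\<le>k. complex_of_real (a j) * cos (of_nat j * z) + complex_of_real (b j) * sin (of_nat j * z))"

definition has_trig_degree :: "nat \<Rightarrow> (nat \<Rightarrow> real) \<Rightarrow> (nat \<Rightarrow> real) \<Rightarrow> bool" where
  "has_trig_degree k a b \<longleftrightarrow> (a k, b k) \<noteq> (0, 0)"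

end

theory Submission
  imports Defs "HOL-Complex_Analysis.Complex_Analysis"
begin

text \<open>Substitute \<open>w = exp (i z)\<close>. Then \<open>w\<^sup>k t(z)\<close> and \<open>w\<^sup>k\<^sup>-\<^sup>1 s(z)\<close> are polynomials \<open>P\<^sub>t(w)\<close>,
  \<open>P\<^sub>s(w)\<close>, so \<open>r(z)\<^sup>n = w h(w)\<close> with \<open>h(w) = w\<^sup>n\<^sup>-\<^sup>1 P\<^sub>s(w)\<^sup>n / P\<^sub>t(w)\<^sup>n\<close>. Since \<open>t\<close> has no
  roots with \<open>Im z > 0\<close> and \<open>P\<^sub>t(0) \<noteq> 0\<close>, \<open>h\<close> is holomorphic on the unit disc. The line
  \<open>Im z = \<eta> > 0\<close> is mapped onto the circle \<open>|w| = exp (-\<eta>)\<close>, where \<open>w h(w) d\<phi> = -i h(w) dw\<close>,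
  so the integral of \<open>r\<^sup>n\<close> over one period vanishes by Cauchy's theorem. The line
  \<open>Im z = -\<eta>\<close> follows by complex conjugation. Hence both one-sided integrals are already \<open>0\<close>
  for every \<open>\<eta> > 0\<close>, and so are their limits.\<close>

definition trig_poly_in_exp :: "nat \<Rightarrow> nat \<Rightarrow> (nat \<Rightarrow> real) \<Rightarrow> (nat \<Rightarrow> real) \<Rightarrow> complex \<Rightarrow> complex" where
  "trig_poly_in_exp K m c d w = (\<Sum>j\<le>m. complex_of_real (c j) * ((w^(K+j) + w^(K-j))/2)
      + complex_of_real (d j) * ((w^(K+j) - w^(K-j))/(2*\<i>)))"

lemma holomorphic_on_trig_poly_in_exp [holomorphic_intros]:
  "trig_poly_in_exp K m c d holomorphic_on A"
  unfolding trig_poly_in_exp_def[abs_def] by (intro holomorphic_intros) auto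

lemma trig_poly_mult_exp_power:
  assumes "m \<le> K"
  shows "trig_poly m c d z * exp (\<i>*z) ^ K = trig_poly_in_exp K m c d (exp (\<i>*z))"
proof -
  define w where "w = exp (\<i>*z)"
  have exp_pos: "exp (\<i> * (of_nat j * z)) = w ^ j" for j
    by (simp add: w_def flip: exp_of_nat_mult) (simp add: algebra_simps)
  have exp_neg: "exp (-(\<i> * (of_nat j * z))) = inverse w ^ j" for j
  proof -
    have "exp (-(\<i> * (of_nat j * z))) = exp (of_nat j * (-(\<i>*z)))" by (simp add: algebra_simps)
    also have "\<dots> = exp (-(\<i>*z)) ^ j" by (rule exp_of_nat_mult)
    finally show ?thesis by (simp add: w_def exp_minus)
  qed
  have shift: "inverse w ^ j * w ^ K = w ^ (K - j)" if "j \<le> K" for j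
  proof -
    have "w ^ K = w ^ (K-j) * w ^ j" using that by (simp flip: power_add)
    thus ?thesis by (simp add: w_def power_inverse field_simps)
  qed
  have distrib: "(C*((x+y)/2) + D*((x-y)/(2*\<i>)))*W = C*((x*W+y*W)/2) + D*((x*W-y*W)/(2*\<i>))"
    for C D x y W :: complex by (simp add: field_simps)
  have "trig_poly m c d z * w ^ K = trig_poly_in_exp K m c d w"
    unfolding trig_poly_def trig_poly_in_exp_def sum_distrib_right
  proof (rule sum.cong[OF refl])
    fix j assume "j \<in> {..m}"
    then have "j \<le> K" using assms by auto
    then show "(complex_of_real (c j) * cos (of_nat j * z) + complex_of_real (d j) * sin (of_nat j * z)) * w ^ K =
        complex_of_real (c j) * ((w ^ (K + j) + w ^ (K - j)) / 2)
        + complex_of_real (d j) * ((w ^ (K + j) - w ^ (K - j)) / (2 * \<i>))"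
      unfolding cos_exp_eq sin_exp_eq exp_pos exp_neg distrib shift[OF \<open>j \<le> K\<close>]
      by (simp add: power_add mult.commute)
  qed
  then show ?thesis by (simp add: w_def)
qed

lemma trig_poly_in_exp_at_0:
  assumes "k \<ge> 1"
  shows "trig_poly_in_exp k k a b 0 = Complex (a k / 2) (b k / 2)"
proof -
  have "trig_poly_in_exp k k a b 0
      = (\<Sum>j\<le>k. if j = k then complex_of_real (a k)/2 - complex_of_real (b k)/(2*\<i>) else 0)"
    unfolding trig_poly_in_exp_def
    by (rule sum.cong[OF refl]) (use assms in \<open>auto simp: zero_power\<close>)
  then show ?thesis by (simp add: complex_eq_iff)
qed

lemma trig_poly_in_exp_nonzero_on_disc:
  assumes deg: "has_trig_degree k a b" "k \<ge> 1"
      and no_upper_roots: "\<And>z. Im z > 0 \<Longrightarrow> trig_poly k a b z \<noteq> 0"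
      and w: "w \<in> ball 0 1"
  shows "trig_poly_in_exp k k a b w \<noteq> 0"
proof (cases "w = 0")
  case True
  show ?thesis
    using deg unfolding True by (simp add: trig_poly_in_exp_at_0 has_trig_degree_def complex_eq_iff)
next
  case False
  define z where "z = - \<i> * Ln w"
  have w_eq: "exp (\<i>*z) = w" using False by (simp add: z_def)
  have "Im z = - ln (norm w)" using False by (simp add: z_def Re_Ln)
  then have "Im z > 0" using w False by simp
  then have "trig_poly k a b z * exp (\<i>*z) ^ k \<noteq> 0" using no_upper_roots by simp
  then show ?thesis by (metis trig_poly_mult_exp_power order_refl w_eq)
qed

lemma trig_poly_cnj: "trig_poly m c d (cnj z) = cnj (trig_poly m c d z)"
  unfolding trig_poly_def by (simp add: cnj_cos cnj_sin)

lemma has_integral_horizontal_line_eq_zero: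
  fixes h :: "complex \<Rightarrow> complex" and \<eta> :: real
  assumes holo: "h holomorphic_on ball 0 1" and "\<eta> > 0"
  shows "((\<lambda>\<phi>. exp (\<i> * (of_real \<phi> + \<i> * of_real \<eta>)) * h (exp (\<i> * (of_real \<phi> + \<i> * of_real \<eta>))))
           has_integral 0) {0..2*pi}"
proof -
  define r where "r = exp (-\<eta>)"
  have r: "0 < r" "r < 1" using \<open>\<eta> > 0\<close> by (auto simp: r_def)
  have "(h has_contour_integral 0) (circlepath 0 r)"
    by (rule Cauchy_theorem_disc_simple[OF holo]) (use r in auto)
  then have "((\<lambda>\<phi>. h (r * cis \<phi>) * r * \<i> * cis \<phi>) has_integral 0) {0..2*pi}"
    by (simp add: circlepath_def has_contour_integral_part_circlepath_iff)
  then have "((\<lambda>\<phi>. \<i> * (r * cis \<phi> * h (r * cis \<phi>))) has_integral 0) {0..2*pi}"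
    by (simp add: mult_ac)
  then have "((\<lambda>\<phi>. r * cis \<phi> * h (r * cis \<phi>)) has_integral 0) {0..2*pi}"
    by (simp add: has_integral_mult_right_iff)
  moreover have "exp (\<i> * (of_real \<phi> + \<i> * of_real \<eta>)) = r * cis \<phi>" for \<phi>
    by (simp add: r_def cis_conv_exp algebra_simps flip: exp_add exp_of_real)
  ultimately show ?thesis by simp
qed

lemma trig_ratio_power_as_exp_times_holomorphic:
  assumes deg: "has_trig_degree k a b" and "m < k"
      and no_upper_roots: "\<And>z. Im z > 0 \<Longrightarrow> trig_poly k a b z \<noteq> 0"
      and "n \<ge> 1"
  obtains h where "h holomorphic_on ball 0 1"
    and "\<And>z. (trig_poly m c d z / trig_poly k a b z) ^ n = exp (\<i>*z) * h (exp (\<i>*z))"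
proof
  define P\<^sub>t where "P\<^sub>t = trig_poly_in_exp k k a b"
  define P\<^sub>s where "P\<^sub>s = trig_poly_in_exp (k-1) m c d"
  show "(\<lambda>w. w^(n-1) * P\<^sub>s w ^ n / P\<^sub>t w ^ n) holomorphic_on ball 0 1"
    unfolding P\<^sub>t_def P\<^sub>s_def using assms
    by (intro holomorphic_intros) (auto dest: trig_poly_in_exp_nonzero_on_disc)
  fix z
  define w where "w = exp (\<i>*z)"
  have "w \<noteq> 0" by (simp add: w_def)
  have "w^(k-1) * w = w^k" using \<open>m < k\<close> by (cases k) auto
  then have "trig_poly m c d z / trig_poly k a b z
      = (trig_poly m c d z * w^(k-1) * w) / (trig_poly k a b z * w^k)"
    using \<open>w \<noteq> 0\<close> by (simp add: mult.assoc)
  also have "\<dots> = w * P\<^sub>s w / P\<^sub>t w"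
    unfolding P\<^sub>s_def P\<^sub>t_def w_def using \<open>m < k\<close> by (simp add: trig_poly_mult_exp_power)
  finally have "(trig_poly m c d z / trig_poly k a b z) ^ n = w^n * P\<^sub>s w ^ n / P\<^sub>t w ^ n"
    by (simp add: power_mult_distrib power_divide)
  also have "\<dots> = w * (w^(n-1) * P\<^sub>s w ^ n / P\<^sub>t w ^ n)"
    using \<open>n \<ge> 1\<close> by (cases n) auto
  finally show "(trig_poly m c d z / trig_poly k a b z) ^ n
      = exp (\<i>*z) * (exp (\<i>*z)^(n-1) * P\<^sub>s (exp (\<i>*z)) ^ n / P\<^sub>t (exp (\<i>*z)) ^ n)"
    by (simp add: w_def)
qed

lemma has_integral_trig_ratio_power_upper:
  assumes "has_trig_degree k a b" and "m < k"
      and "\<And>z. Im z > 0 \<Longrightarrow> trig_poly k a b z \<noteq> 0"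
      and "n \<ge> 1" and "\<eta> > 0"
  shows "((\<lambda>\<phi>. (trig_poly m c d (of_real \<phi> + \<i> * of_real \<eta>) / trig_poly k a b (of_real \<phi> + \<i> * of_real \<eta>)) ^ n)
           has_integral 0) {0..2*pi}"
proof -
  obtain h where "h holomorphic_on ball 0 1"
    and "\<And>z. (trig_poly m c d z / trig_poly k a b z) ^ n = exp (\<i>*z) * h (exp (\<i>*z))"
    using trig_ratio_power_as_exp_times_holomorphic assms(1-4) by metis
  with has_integral_horizontal_line_eq_zero[of h \<eta>] \<open>\<eta> > 0\<close> show ?thesis by simp
qed

lemma has_integral_trig_ratio_power_lower:
  assumes "has_trig_degree k a b" and "m < k"
      and "\<And>z. Im z > 0 \<Longrightarrow> trig_poly k a b z \<noteq> 0"
      and "n \<ge> 1" and "\<eta> > 0"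
  shows "((\<lambda>\<phi>. (trig_poly m c d (of_real \<phi> - \<i> * of_real \<eta>) / trig_poly k a b (of_real \<phi> - \<i> * of_real \<eta>)) ^ n)
           has_integral 0) {0..2*pi}"
proof -
  have "(cnj \<circ> (\<lambda>\<phi>. (trig_poly m c d (of_real \<phi> + \<i> * of_real \<eta>) / trig_poly k a b (of_real \<phi> + \<i> * of_real \<eta>)) ^ n)
          has_integral cnj 0) {0..2*pi}"
    using has_integral_trig_ratio_power_upper[OF assms] by (subst has_integral_cnj)
  moreover have "trig_poly m' c' d' (of_real \<phi> - \<i> * of_real \<eta>) = cnj (trig_poly m' c' d' (of_real \<phi> + \<i> * of_real \<eta>))"
    for m' c' d' \<phi>
    by (simp flip: trig_poly_cnj add: complex_eq_iff)
  ultimately show ?thesis by (simp add: o_def)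
qed

theorem lemma6:
  fixes k m :: nat and a b c d :: "nat \<Rightarrow> real" and n :: nat
  defines "T \<equiv> trig_poly k a b"
      and "S \<equiv> trig_poly m c d"
  assumes deg_t: "has_trig_degree k a b"
      and deg_s: "has_trig_degree m c d"
      and deg_lt: "m < k"
      and real_roots: "\<forall>z. T z = 0 \<longrightarrow> Im z = 0"
      and n_pos: "n \<ge> 1"
  shows "\<exists>Ip Iq Lp Lm.
           (\<forall>\<^sub>F \<eta> in at_right 0.
              ((\<lambda>\<phi>. (S (complex_of_real \<phi> + \<i> * complex_of_real \<eta>) / T (complex_of_real \<phi> + \<i> * complex_of_real \<eta>)) ^ n) has_integral Ip \<eta>) {0..2*pi})
         \<and> (\<forall>\<^sub>F \<eta> in at_right 0.
              ((\<lambda>\<phi>. (S (complex_of_real \<phi> - \<i> * complex_of_real \<eta>) / T (complex_of_real \<phi> - \<i> * complex_of_real \<eta>)) ^ n) has_integral Iq \<eta>) {0..2*pi})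
         \<and> (Ip \<longlongrightarrow> Lp) (at_right 0)
         \<and> (Iq \<longlongrightarrow> Lm) (at_right 0)
         \<and> Lp / 2 + Lm / 2 = 0"
proof (intro exI conjI)
  have no_upper_roots: "Im z > 0 \<Longrightarrow> trig_poly k a b z \<noteq> 0" for z
    using real_roots by (auto simp: T_def)
  show "\<forall>\<^sub>F \<eta> in at_right 0.
      ((\<lambda>\<phi>. (S (of_real \<phi> + \<i> * of_real \<eta>) / T (of_real \<phi> + \<i> * of_real \<eta>)) ^ n) has_integral 0) {0..2*pi}"
    using has_integral_trig_ratio_power_upper[OF deg_t deg_lt no_upper_roots n_pos]
    by (auto simp: S_def T_def intro!: eventually_mono[OF eventually_at_right_less])
  show "\<forall>\<^sub>F \<eta> in at_right 0.
      ((\<lambda>\<phi>. (S (of_real \<phi> - \<i> * of_real \<eta>) / T (of_real \<phi> - \<i> * of_real \<eta>)) ^ n) has_integral 0) {0..2*pi}"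
    using has_integral_trig_ratio_power_lower[OF deg_t deg_lt no_upper_roots n_pos]
    by (auto simp: S_def T_def intro!: eventually_mono[OF eventually_at_right_less])
qed (rule tendsto_const, rule tendsto_const, simp)

end
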